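(* For any two words $w_0,w_1\in\mathcal{M}_{n_x,n_y}$ (comparable or not) there are decompositions $w_0=w_0^0w_0^1\cdots w_0^{2k-1}$ and $w_1=w_1^0w_1^1\cdots w_1^{2k-1}$ (concatenations) such that for each $i$, $w_0^i$ and $w_1^i$ have the same numbers of $x$'s and of $y$'s, and $w_0^i\le w_1^i$ if $i$ is even while $w_1^i\le w_0^i$ if $i$ is odd. The words $w_0^0,w_1^0,w_0^{2k-1},w_1^{2k-1}$ may be empty, but all other $w_j^i$ are nonempty.
   Context: $\mathcal{M}_{n_x,n_y}$ is the set of words in letters $x,y$ with $n_x$ $x$'s and $n_y$ $y$'s. For words $u,v$ with the same numbers of each letter, $u\le v$ iff for each $i$ the position of the $i$-th $x$ (from the left) in $u$ is at most its position in $v$. *)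

theory Defs
  imports Main
begin

datatype letter = X | Y

type_synonym word = "letter list"

definition nx :: "word \<Rightarrow> nat" where "nx w = count_list w X"
definition ny :: "word \<Rightarrow> nat" where "ny w = count_list w Y"

definition M :: "nat \<Rightarrow> nat \<Rightarrow> word set" where
  "M a b = {w. nx w = a \<and> ny w = b}"

definition xpos :: "word \<Rightarrow> nat list" where
  "xpos w = filter (\<lambda>i. w ! i = X) [0..<length w]"

definition word_le :: "word \<Rightarrow> word \<Rightarrow> bool" where
  "word_le u v \<longleftrightarrow> nx u = nx v \<and> ny u = ny v \<and>
     (\<forall>i < nx u. xpos u ! i \<le> xpos v ! i)"

end

theory Submission imports Defs begin

text \<open>Let d(t) be the number of X's among the first t letters of w0 minus that of w1.
  Comparability u \<le> v of words with equal letter counts means exactly that every prefix of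
  u contains at least as many X's as the prefix of v of the same length, i.e. d \<ge> 0. Since
  d moves by at most 1 per step, it keeps its sign between consecutive zeros; cutting both
  words at the first positive zero of d therefore splits off a pair of nonempty comparable
  blocks. Induction on the length, prepending these blocks to a decomposition of the rest
  (merging with the adjacent block of the same direction, or opening a new pair of blocks),
  yields the alternating decomposition.\<close>

lemma nx_Nil [simp]: "nx [] = 0" and ny_Nil [simp]: "ny [] = 0"
  by (simp_all add: nx_def ny_def)

lemma nx_Cons [simp]: "nx (c # w) = (if c = X then 1 else 0) + nx w"
  and ny_Cons [simp]: "ny (c # w) = (if c = Y then 1 else 0) + ny w"
  by (simp_all add: nx_def ny_def)

lemma nx_append [simp]: "nx (u @ v) = nx u + nx v"
  and ny_append [simp]: "ny (u @ v) = ny u + ny v"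
  by (simp_all add: nx_def ny_def)

lemma length_eq_nx_add_ny: "length w = nx w + ny w"
  by (induction w) (auto split: letter.splits intro: letter.exhaust)

lemma nx_take_le: "nx (take t w) \<le> nx w"
  by (metis append_take_drop_id le_add1 nx_append)

lemma nx_take_Suc_le: "nx (take (Suc s) w) \<le> nx (take s w) + 1"
  and nx_take_mono_Suc: "nx (take s w) \<le> nx (take (Suc s) w)"
  by (cases "s < length w"; simp add: take_Suc_conv_app_nth)+

lemma xpos_snoc: "xpos (u @ [c]) = xpos u @ (if c = X then [length u] else [])"
  by (auto simp: xpos_def nth_append intro!: filter_cong)

lemma length_xpos: "length (xpos u) = nx u"
  by (induction u rule: rev_induct) (auto simp: xpos_snoc, simp add: xpos_def)

lemma xpos_less_length: "j \<in> set (xpos u) \<Longrightarrow> j < length u"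
  by (simp add: xpos_def)

lemma xpos_nth_less_iff: "i < nx u \<Longrightarrow> xpos u ! i < t \<longleftrightarrow> i < nx (take t u)"
proof (induction u arbitrary: t rule: rev_induct)
  case Nil
  then show ?case by simp
next
  case (snoc c u)
  show ?case
  proof (cases "i < nx u")
    case True
    then have xpos_eq: "xpos (u @ [c]) ! i = xpos u ! i"
      by (simp add: xpos_snoc nth_append length_xpos)
    have "xpos u ! i < length u"
      using True xpos_less_length[of "xpos u ! i" u] by (simp add: length_xpos)
    then show ?thesis
      using snoc.IH[OF True, of t] True xpos_eq by (cases "t \<le> length u") auto
  next
    case False
    then have "c = X" and "i = nx u"
      using snoc.prems by (auto split: if_splits)
    moreover have "nx (take t u) \<le> nx u"
      by (rule nx_take_le)
    ultimately show ?thesis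
      by (cases "t \<le> length u") (auto simp: xpos_snoc nth_append length_xpos)
  qed
qed

lemma word_le_iff_prefix_counts:
  "word_le u v \<longleftrightarrow> nx u = nx v \<and> ny u = ny v \<and> (\<forall>t. nx (take t v) \<le> nx (take t u))"
proof (cases "nx u = nx v")
  case counts: True
  have "(\<forall>i<nx u. xpos u ! i \<le> xpos v ! i) \<longleftrightarrow> (\<forall>t. nx (take t v) \<le> nx (take t u))"
  proof safe
    fix t
    assume le: "\<forall>i<nx u. xpos u ! i \<le> xpos v ! i"
    show "nx (take t v) \<le> nx (take t u)"
    proof (rule ccontr)
      assume "\<not> ?thesis"
      moreover have "nx (take t v) \<le> nx u"
        using counts nx_take_le by metis
      ultimately have i: "nx (take t u) < nx u" and "xpos v ! nx (take t u) < t"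
        using xpos_nth_less_iff[of "nx (take t u)" v t] counts by auto
      then have "xpos u ! nx (take t u) < t"
        using le by fastforce
      then show False
        using xpos_nth_less_iff[OF i, of t] by blast
    qed
  next
    fix i
    assume prefixes: "\<forall>t. nx (take t v) \<le> nx (take t u)" and i: "i < nx u"
    have "i < nx (take (Suc (xpos v ! i)) v)"
      using xpos_nth_less_iff[of i v "Suc (xpos v ! i)"] i counts by simp
    then have "i < nx (take (Suc (xpos v ! i)) u)"
      using prefixes less_le_trans by blast
    then show "xpos u ! i \<le> xpos v ! i"
      using xpos_nth_less_iff[OF i, of "Suc (xpos v ! i)"] by simp
  qed
  then show ?thesis
    by (simp add: word_le_def counts)
qed (simp add: word_le_def)

lemma word_le_refl: "word_le u u"
  by (simp add: word_le_def)

lemma word_le_length: "word_le u v \<Longrightarrow> length u = length v"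
  by (simp add: word_le_def length_eq_nx_add_ny)

lemma word_le_append:
  assumes "word_le u v" and "word_le u' v'"
  shows "word_le (u @ u') (v @ v')"
  using assms word_le_length[OF assms(1)] by (simp add: word_le_iff_prefix_counts add_mono)

lemma int_walk_keeps_sign:
  fixes g :: "nat \<Rightarrow> int"
  assumes step: "\<And>s. \<bar>g (Suc s) - g s\<bar> \<le> 1"
    and nonzero: "\<And>s. 0 < s \<Longrightarrow> s < t \<Longrightarrow> g s \<noteq> 0"
    and "0 \<le> g 1" and "0 < s" and "s \<le> t"
  shows "0 \<le> g s"
  using \<open>0 < s\<close> \<open>s \<le> t\<close>
proof (induction s)
  case (Suc s)
  show ?case
  proof (cases "s = 0")
    case False
    then have "0 \<le> g s" and "g s \<noteq> 0"
      using Suc nonzero by auto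
    then show ?thesis
      using step[of s] by linarith
  qed (use \<open>0 \<le> g 1\<close> in simp)
qed simp

lemma prefix_le_up_to_first_balance:
  assumes len: "length w0 = length w1" "t \<le> length w0"
    and balanced: "nx (take t w0) = nx (take t w1)"
    and unbalanced: "\<And>s. 0 < s \<Longrightarrow> s < t \<Longrightarrow> nx (take s w0) \<noteq> nx (take s w1)"
    and first: "nx (take 1 w1) \<le> nx (take 1 w0)"
  shows "word_le (take t w0) (take t w1)"
proof -
  define d where "d s = int (nx (take s w0)) - int (nx (take s w1))" for s
  have "0 \<le> d s" if "0 < s" "s \<le> t" for s
  proof (rule int_walk_keeps_sign[OF _ _ _ that])
    show "\<bar>d (Suc s) - d s\<bar> \<le> 1" for s
      using nx_take_Suc_le[of s w0] nx_take_mono_Suc[of s w0]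
        nx_take_Suc_le[of s w1] nx_take_mono_Suc[of s w1]
      unfolding d_def by linarith
  qed (use unbalanced first in \<open>auto simp: d_def\<close>)
  then have "nx (take s (take t w1)) \<le> nx (take s (take t w0))" for s
    using balanced by (cases "s = 0") (auto simp: d_def min_def)
  moreover have "ny (take t w0) = ny (take t w1)"
    using length_eq_nx_add_ny[of "take t w0"] length_eq_nx_add_ny[of "take t w1"] len balanced
    by simp
  ultimately show ?thesis
    using balanced by (simp add: word_le_iff_prefix_counts)
qed

lemma obtain_comparable_prefix:
  assumes "nx w0 = nx w1" "ny w0 = ny w1" "w0 \<noteq> []"
  obtains t where "0 < t" "t \<le> length w0"
    "word_le (take t w0) (take t w1) \<or> word_le (take t w1) (take t w0)"
proof -
  have len: "length w0 = length w1"
    using assms length_eq_nx_add_ny by metis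
  have ex: "0 < length w0 \<and> nx (take (length w0) w0) = nx (take (length w0) w1)"
    using assms len by auto
  define t where "t = (LEAST t. 0 < t \<and> nx (take t w0) = nx (take t w1))"
  have t: "0 < t" and balanced: "nx (take t w0) = nx (take t w1)"
    using LeastI[of "\<lambda>t. 0 < t \<and> nx (take t w0) = nx (take t w1)", OF ex] by (simp_all add: t_def)
  have "t \<le> length w0"
    unfolding t_def using ex by (rule Least_le)
  have unbalanced: "nx (take s w0) \<noteq> nx (take s w1)" if "0 < s" "s < t" for s
    using not_less_Least[of s] that unfolding t_def by blast
  have "word_le (take t w0) (take t w1) \<or> word_le (take t w1) (take t w0)"
  proof (cases "nx (take 1 w1) \<le> nx (take 1 w0)")
    case True
    then show ?thesis
      using prefix_le_up_to_first_balance[OF len \<open>t \<le> length w0\<close> balanced unbalanced] by blast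
  next
    case False
    have "nx (take s w1) \<noteq> nx (take s w0)" if "0 < s" "s < t" for s
      using unbalanced[OF that] by (rule not_sym)
    with False show ?thesis
      using prefix_le_up_to_first_balance[OF len[symmetric], of t] \<open>t \<le> length w0\<close> len balanced
      by simp
  qed
  with t \<open>t \<le> length w0\<close> that show ?thesis
    by blast
qed

definition alternating_decomposition ::
  "word \<Rightarrow> word \<Rightarrow> nat \<Rightarrow> word list \<Rightarrow> word list \<Rightarrow> bool" where
  "alternating_decomposition w0 w1 k p q \<longleftrightarrow> 1 \<le> k \<and> length p = 2 * k \<and> length q = 2 * k \<and>
     concat p = w0 \<and> concat q = w1 \<and>
     (\<forall>i < 2 * k. (even i \<longrightarrow> word_le (p ! i) (q ! i)) \<and> (odd i \<longrightarrow> word_le (q ! i) (p ! i))) \<and>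
     (\<forall>i. 0 < i \<and> i < 2 * k - 1 \<longrightarrow> p ! i \<noteq> [] \<and> q ! i \<noteq> [])"

lemma alternating_decomposition_Nil: "alternating_decomposition [] [] 1 [[], []] [[], []]"
  by (auto simp: alternating_decomposition_def word_le_refl less_2_cases_iff)

lemma alternating_decomposition_ConsE:
  assumes "alternating_decomposition w0 w1 k p q"
  obtains x0 x1 ps y0 y1 qs where "p = x0 # x1 # ps" "q = y0 # y1 # qs"
proof -
  have "2 \<le> length p" "2 \<le> length q"
    using assms by (auto simp: alternating_decomposition_def)
  then show ?thesis
    using that by (cases p; cases q) (auto simp: Suc_le_length_iff)
qed

lemma alternating_decomposition_first_blocks:
  assumes "alternating_decomposition w0 w1 k (x0 # x1 # ps) (y0 # y1 # qs)"
  shows "word_le x0 y0" and "word_le y1 x1"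
proof -
  have "\<forall>i < 2 * k. (even i \<longrightarrow> word_le ((x0 # x1 # ps) ! i) ((y0 # y1 # qs) ! i)) \<and>
      (odd i \<longrightarrow> word_le ((y0 # y1 # qs) ! i) ((x0 # x1 # ps) ! i))" and "1 \<le> k"
    using assms by (simp_all add: alternating_decomposition_def)
  then show "word_le x0 y0" and "word_le y1 x1"
    by (force dest: spec[of _ 0] spec[of _ 1])+
qed

lemma alternating_decomposition_list_update:
  assumes dec: "alternating_decomposition w0 w1 k p q" and "j < 2 * k"
    and ordered: "(even j \<longrightarrow> word_le a b) \<and> (odd j \<longrightarrow> word_le b a)"
    and nonempty: "0 < j \<Longrightarrow> j < 2 * k - 1 \<Longrightarrow> a \<noteq> [] \<and> b \<noteq> []"
  shows "alternating_decomposition (concat (p[j := a])) (concat (q[j := b])) k (p[j := a]) (q[j := b])"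
  using assms by (auto simp: alternating_decomposition_def nth_list_update)

lemma alternating_decomposition_prepend_le:
  assumes dec: "alternating_decomposition r0 r1 k (x0 # x1 # ps) (y0 # y1 # qs)"
    and "word_le u v"
  shows "alternating_decomposition (u @ r0) (v @ r1) k ((u @ x0) # x1 # ps) ((v @ y0) # y1 # qs)"
proof -
  have "word_le (u @ x0) (v @ y0)"
    using \<open>word_le u v\<close> alternating_decomposition_first_blocks(1)[OF dec] by (rule word_le_append)
  moreover have "0 < 2 * k" and "r0 = concat (x0 # x1 # ps)" and "r1 = concat (y0 # y1 # qs)"
    using dec by (auto simp: alternating_decomposition_def)
  ultimately show ?thesis
    using alternating_decomposition_list_update[OF dec, of 0 "u @ x0" "v @ y0"] by simp
qed

lemma alternating_decomposition_prepend_ge_merge: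
  assumes dec: "alternating_decomposition r0 r1 k ([] # x1 # ps) ([] # y1 # qs)"
    and "word_le v u" "u \<noteq> []" "v \<noteq> []"
  shows "alternating_decomposition (u @ r0) (v @ r1) k ([] # (u @ x1) # ps) ([] # (v @ y1) # qs)"
proof -
  have "word_le (v @ y1) (u @ x1)"
    using \<open>word_le v u\<close> alternating_decomposition_first_blocks(2)[OF dec] by (rule word_le_append)
  moreover have "1 < 2 * k" and "r0 = concat ([] # x1 # ps)" and "r1 = concat ([] # y1 # qs)"
    using dec by (auto simp: alternating_decomposition_def)
  ultimately show ?thesis
    using alternating_decomposition_list_update[OF dec, of 1 "u @ x1" "v @ y1"] assms(3,4) by simp
qed

lemma alternating_decomposition_prepend_ge_new:
  assumes dec: "alternating_decomposition r0 r1 k p q"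
    and "word_le v u" "u \<noteq> []" "v \<noteq> []" "p ! 0 \<noteq> []" "q ! 0 \<noteq> []"
  shows "alternating_decomposition (u @ r0) (v @ r1) (Suc k) ([] # u # p) ([] # v # q)"
proof -
  let ?p = "[] # u # p" and ?q = "[] # v # q"
  have order: "(even i \<longrightarrow> word_le (?p ! i) (?q ! i)) \<and> (odd i \<longrightarrow> word_le (?q ! i) (?p ! i))"
    if "i < 2 * Suc k" for i
  proof (cases i)
    case (Suc i')
    then show ?thesis
      using that dec \<open>word_le v u\<close> by (cases i') (auto simp: alternating_decomposition_def)
  qed (simp add: word_le_refl)
  have "p ! j \<noteq> [] \<and> q ! j \<noteq> []" if "j < 2 * k - 1" for j
    using dec assms(5,6) that by (cases j) (auto simp: alternating_decomposition_def)
  then have nonempty: "?p ! i \<noteq> [] \<and> ?q ! i \<noteq> []" if "0 < i" "i < 2 * Suc k - 1" for i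
    using that assms(3,4) by (cases i; cases "i - 1") auto
  show ?thesis
    using dec order nonempty by (auto simp: alternating_decomposition_def)
qed

lemma alternating_decomposition_prepend:
  assumes dec: "alternating_decomposition r0 r1 k p q"
    and "u \<noteq> []" "v \<noteq> []" and comparable: "word_le u v \<or> word_le v u"
  shows "\<exists>k' p' q'. alternating_decomposition (u @ r0) (v @ r1) k' p' q'"
proof -
  obtain x0 x1 ps y0 y1 qs where pq: "p = x0 # x1 # ps" "q = y0 # y1 # qs"
    using dec by (rule alternating_decomposition_ConsE)
  note dec' = dec[unfolded pq]
  show ?thesis
  proof (cases "word_le u v")
    case True
    then show ?thesis
      using alternating_decomposition_prepend_le[OF dec'] by blast
  next
    case False
    then have "word_le v u"
      using comparable by blast
    moreover have "x0 = [] \<longleftrightarrow> y0 = []"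
      using word_le_length[OF alternating_decomposition_first_blocks(1)[OF dec']] by auto
    ultimately show ?thesis
    proof (cases "x0 = []")
      case True
      then have "alternating_decomposition r0 r1 k ([] # x1 # ps) ([] # y1 # qs)"
        using dec' \<open>x0 = [] \<longleftrightarrow> y0 = []\<close> by simp
      then show ?thesis
        using alternating_decomposition_prepend_ge_merge \<open>word_le v u\<close> assms(2,3) by blast
    next
      case False
      then show ?thesis
        using alternating_decomposition_prepend_ge_new[OF dec' \<open>word_le v u\<close>] assms(2,3)
          \<open>x0 = [] \<longleftrightarrow> y0 = []\<close> by auto
    qed
  qed
qed

lemma alternating_decomposition_exists:
  "nx w0 = nx w1 \<Longrightarrow> ny w0 = ny w1 \<Longrightarrow> \<exists>k p q. alternating_decomposition w0 w1 k p q"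
proof (induction "length w0" arbitrary: w0 w1 rule: less_induct)
  case less
  show ?case
  proof (cases "w0 = []")
    case True
    then have "w1 = []"
      using less.prems length_eq_nx_add_ny[of w1] by simp
    then show ?thesis
      using True alternating_decomposition_Nil by blast
  next
    case False
    with less.prems obtain t where t: "0 < t" "t \<le> length w0"
      and comparable: "word_le (take t w0) (take t w1) \<or> word_le (take t w1) (take t w0)"
      by (rule obtain_comparable_prefix)
    then have counts: "nx (take t w0) = nx (take t w1)" "ny (take t w0) = ny (take t w1)"
      by (auto simp: word_le_def)
    then have "nx (drop t w0) = nx (drop t w1)" "ny (drop t w0) = ny (drop t w1)"
      using less.prems append_take_drop_id[of t w0] append_take_drop_id[of t w1]
      by (metis add_left_imp_eq nx_append ny_append)+
    moreover have "length (drop t w0) < length w0"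
      using t by simp
    ultimately obtain k p q where "alternating_decomposition (drop t w0) (drop t w1) k p q"
      using less.hyps by blast
    moreover have "take t w1 \<noteq> []"
      using t counts length_eq_nx_add_ny False by (metis length_greater_0_conv length_take min_absorb2)
    ultimately show ?thesis
      using alternating_decomposition_prepend[OF _ _ _ comparable] t False by fastforce
  qed
qed

theorem mainTheorem10:
  fixes w0 w1 :: word and a b :: nat
  assumes "w0 \<in> M a b" and "w1 \<in> M a b"
  shows "\<exists>k::nat. \<exists>p q :: word list. k \<ge> 1 \<and> length p = 2 * k \<and> length q = 2 * k \<and>
           concat p = w0 \<and> concat q = w1 \<and>
           (\<forall>i < 2 * k. nx (p ! i) = nx (q ! i) \<and> ny (p ! i) = ny (q ! i)) \<and>
           (\<forall>i < 2 * k. (even i \<longrightarrow> word_le (p ! i) (q ! i)) \<and>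
                        (odd i \<longrightarrow> word_le (q ! i) (p ! i))) \<and>
           (\<forall>i. 0 < i \<and> i < 2 * k - 1 \<longrightarrow> p ! i \<noteq> [] \<and> q ! i \<noteq> [])"
proof -
  obtain k p q where dec: "alternating_decomposition w0 w1 k p q"
    using assms alternating_decomposition_exists[of w0 w1] by (auto simp: M_def)
  have "nx (p ! i) = nx (q ! i) \<and> ny (p ! i) = ny (q ! i)" if "i < 2 * k" for i
    using dec that by (cases "even i") (auto simp: alternating_decomposition_def word_le_def)
  with dec show ?thesis
    unfolding alternating_decomposition_def by blast
qed

end
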